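(* Let $n\geq1$ and $\eta\in\Omega$. There exists a unique $J_\eta\subset\Lambda_{3,n}$ such that $\{A_n\beta:\beta\in J_\eta\}=T'_\eta$. Moreover, $J_\eta\in S_{A_n}$.
   Context: Notation: for $\beta\in\mathbb N^t$, $|\beta|$ is the coordinate sum, $\gamma\leq\beta$ is coordinatewise, $\binom{\beta}{\gamma}=\prod_i\binom{\beta_i}{\gamma_i}$; $\Lambda_{t,n}=\{\beta\in\mathbb N^t:1\leq|\beta|\leq n\}$, $\lambda_{t,n}=|\Lambda_{t,n}|$; for $v\in\mathbb N^2$, $\bar v=(\binom{v}{\alpha})_{\alpha\in\Lambda_{2,n}}\in\mathbb C^{\lambda_{2,n}}$. $A_n=\begin{pmatrix}1&1&n\\0&1&n+1\end{pmatrix}$. For $\beta\in\Lambda_{3,n}$, $c_\beta=\sum_{\gamma\in\mathbb N^3,\gamma\leq\beta}(-1)^{|\beta-\gamma|}\binom{\beta}{\gamma}\overline{A_n\gamma}$; $S_{A_n}$ is the set of $J\subset\Lambda_{3,n}$ with $|J|=\lambda_{2,n}$ such that the matrix with rows $c_\beta$ ($\beta\in J$) has non-zero determinant. $\Omega$ is the set of sequences $\eta=(z,d_0,\ldots,d_r)$ with $z\in\{0,1\}$, $d_0=0$, $d_i\geq1$ ($1\leq i\leq r$), $\sum d_i=n$. For $j\in\{1,\ldots,n\}$ let $t$ be unique with $\sum_{i=0}^{t-1}d_i<j\leq\sum_{i=0}^td_i$, $c=j-\sum_{i=0}^{t-1}d_i$; $v_{j,\eta}=(\sum_{i\text{ odd},i<t}d_i+c,0)$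 if $z=1,t$ odd; $(0,\sum_{i\text{ even},i<t}d_i+c)$ if $z=1,t$ even; $(0,\sum_{i\text{ odd},i<t}d_i+c)$ if $z=0,t$ odd; $(\sum_{i\text{ even},i<t}d_i+c,0)$ if $z=0,t$ even. $T_{j,\eta}=\{v_{j,\eta}+p(1,1):0\leq p\leq n-j\}$, $T_{0,\eta}=\{(p,p):1\leq p\leq n\}$. Let $r_{j,\eta}=n\cdot\pi_2(v_{j,\eta})$ (second coordinate) and $T'_\eta=T_{0,\eta}\cup\bigcup_{j=1}^n\{v+(r_{j,\eta},r_{j,\eta}):v\in T_{j,\eta}\}$. *)

theory Defs
  imports Complex_Main "Jordan_Normal_Form.Determinant"
begin

definition Lambda2 :: "nat \<Rightarrow> (nat \<times> nat) set" where
  "Lambda2 n = {(a1, a2). 1 \<le> a1 + a2 \<and> a1 + a2 \<le> n}"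

definition Lambda3 :: "nat \<Rightarrow> (nat \<times> nat \<times> nat) set" where
  "Lambda3 n = {(b1, b2, b3). 1 \<le> b1 + b2 + b3 \<and> b1 + b2 + b3 \<le> n}"

definition lambda2 :: "nat \<Rightarrow> nat" where
  "lambda2 n = card (Lambda2 n)"

text \<open>Multiplication by the matrix A_n = ((1,1,n),(0,1,n+1)).\<close>
fun A_mul :: "nat \<Rightarrow> nat \<times> nat \<times> nat \<Rightarrow> nat \<times> nat" where
  "A_mul n (g1, g2, g3) = (g1 + g2 + n * g3, g2 + (n + 1) * g3)"

fun binom2 :: "nat \<times> nat \<Rightarrow> nat \<times> nat \<Rightarrow> nat" where
  "binom2 (v1, v2) (a1, a2) = (v1 choose a1) * (v2 choose a2)"

fun binom3 :: "nat \<times> nat \<times> nat \<Rightarrow> nat \<times> nat \<times> nat \<Rightarrow> nat" where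
  "binom3 (b1, b2, b3) (g1, g2, g3) = (b1 choose g1) * (b2 choose g2) * (b3 choose g3)"

fun abs3 :: "nat \<times> nat \<times> nat \<Rightarrow> nat" where
  "abs3 (b1, b2, b3) = b1 + b2 + b3"

fun below3 :: "nat \<times> nat \<times> nat \<Rightarrow> (nat \<times> nat \<times> nat) set" where
  "below3 (b1, b2, b3) = {0..b1} \<times> {0..b2} \<times> {0..b3}"

definition vbar :: "nat \<Rightarrow> nat \<times> nat \<Rightarrow> nat \<times> nat \<Rightarrow> complex" where
  "vbar n v \<alpha> = of_nat (binom2 v \<alpha>)"

definition cvec :: "nat \<Rightarrow> nat \<times> nat \<times> nat \<Rightarrow> nat \<times> nat \<Rightarrow> complex" where
  "cvec n \<beta> \<alpha> = (\<Sum>\<gamma>\<in>below3 \<beta>.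
      (-1) ^ (abs3 \<beta> - abs3 \<gamma>) * of_nat (binom3 \<beta> \<gamma>) * vbar n (A_mul n \<gamma>) \<alpha>)"

text \<open>Rows and columns are enumerated by arbitrary bijections with
  {0..<lambda2 n}; the non-vanishing of the determinant does not depend on this choice.\<close>
definition S_A :: "nat \<Rightarrow> (nat \<times> nat \<times> nat) set set" where
  "S_A n = {J. J \<subseteq> Lambda3 n \<and> card J = lambda2 n \<and>
     (\<exists>f g. bij_betw f {..<lambda2 n} J \<and> bij_betw g {..<lambda2 n} (Lambda2 n) \<and>
        det (mat (lambda2 n) (lambda2 n) (\<lambda>(i, j). cvec n (f i) (g j))) \<noteq> 0)}"

text \<open>Omega: eta = (z, [d_0, ..., d_r]).\<close>
definition Omega :: "nat \<Rightarrow> (nat \<times> nat list) set" where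
  "Omega n = {(z, ds). z \<in> {0, 1} \<and> ds \<noteq> [] \<and> ds ! 0 = 0 \<and>
      (\<forall>i\<in>{1..<length ds}. 1 \<le> ds ! i) \<and> sum_list ds = n}"

definition psum :: "nat list \<Rightarrow> nat \<Rightarrow> nat" where
  "psum ds t = (\<Sum>i<t. ds ! i)"

definition tidx :: "nat list \<Rightarrow> nat \<Rightarrow> nat" where
  "tidx ds j = (THE t. psum ds t < j \<and> j \<le> psum ds (Suc t))"

definition oddsum :: "nat list \<Rightarrow> nat \<Rightarrow> nat" where
  "oddsum ds t = (\<Sum>i\<in>{i. i < t \<and> odd i}. ds ! i)"

definition evensum :: "nat list \<Rightarrow> nat \<Rightarrow> nat" where
  "evensum ds t = (\<Sum>i\<in>{i. i < t \<and> even i}. ds ! i)"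

definition v_vec :: "nat \<Rightarrow> nat \<times> nat list \<Rightarrow> nat \<times> nat" where
  "v_vec j eta = (case eta of (z, ds) \<Rightarrow>
     (let t = tidx ds j; c = j - psum ds t in
       if z = 1 then
         (if odd t then (oddsum ds t + c, 0) else (0, evensum ds t + c))
       else
         (if odd t then (0, oddsum ds t + c) else (evensum ds t + c, 0))))"

definition T_set :: "nat \<Rightarrow> nat \<Rightarrow> nat \<times> nat list \<Rightarrow> (nat \<times> nat) set" where
  "T_set n j eta = {(fst (v_vec j eta) + p, snd (v_vec j eta) + p) | p. p \<le> n - j}"

definition T0_set :: "nat \<Rightarrow> (nat \<times> nat) set" where
  "T0_set n = {(p, p) | p. 1 \<le> p \<and> p \<le> n}"

definition r_val :: "nat \<Rightarrow> nat \<Rightarrow> nat \<times> nat list \<Rightarrow> nat" where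
  "r_val n j eta = n * snd (v_vec j eta)"

definition T'_set :: "nat \<Rightarrow> nat \<times> nat list \<Rightarrow> (nat \<times> nat) set" where
  "T'_set n eta = T0_set n \<union>
     (\<Union>j\<in>{1..n}. (\<lambda>(a, b). (a + r_val n j eta, b + r_val n j eta)) ` T_set n j eta)"

end

theory Submission
  imports Defs "HOL-Library.Function_Algebras"
begin

(*
  For x indexed by Lambda_{2,n}, the combination sum_alpha c_beta(alpha) x_alpha is the
  beta-th mixed finite difference, taken along the three columns of A_n, of the Newton
  polynomial L(i,k) = sum_alpha x_alpha binom(i, alpha_1) binom(k, alpha_2); L has degree at
  most n and no constant term. After the shear M(i,k) = L(i+k,k) the first two columns of A_n
  become the coordinate directions.

  Unwinding the definition of T'_eta, its preimage under A_n is a staircase: for every p <= n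
  it consists of (a,p,0) for 1 <= a <= X_p, of (0,p,b) for 1 <= b <= Y_p and, if p >= 1, of
  (0,p,0), where X_p and Y_p count the j <= n - p for which v_{j,eta} lies on the first resp.
  second axis, so X_p + Y_p = n - p. Hence it has lambda_{2,n} elements, and it is unique
  because A_n is injective on Lambda_{3,n}.

  If all rows of the staircase vanish on x, descending induction on p shows that the p-th
  difference of M in the second variable vanishes: once the (p+1)-st one does, the p-th one is
  a polynomial of degree at most n - p in the first variable alone, and the rows with middle
  entry p make it vanish at the n - p + 1 consecutive integers -Y_p, ..., X_p. So M = 0,
  hence x = 0, and the square matrix formed by the rows is nonsingular.
*)

section \<open>Forward differences\<close>

definition fdiff :: "(int \<Rightarrow> 'a::ab_group_add) \<Rightarrow> int \<Rightarrow> 'a" where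
  "fdiff h z = h (z + 1) - h z"

lemma alternating_binomial_sum_Suc:
  fixes H :: "nat \<Rightarrow> 'a::comm_ring_1"
  shows "(\<Sum>l\<le>Suc c. (-1) ^ (Suc c - l) * of_nat (Suc c choose l) * H l)
       = (\<Sum>l\<le>c. (-1) ^ (c - l) * of_nat (c choose l) * (H (Suc l) - H l))"
proof -
  have shifted: "(\<Sum>l\<le>Suc c. (-1) ^ (Suc c - l) * of_nat (c choose l) * H l)
     = (-1) ^ Suc c * H 0 + (\<Sum>l\<le>c. (-1) ^ (c - l) * of_nat (c choose Suc l) * H (Suc l))"
    by (simp only: sum.atMost_Suc_shift) simp
  have unshifted: "(\<Sum>l\<le>Suc c. (-1) ^ (Suc c - l) * of_nat (c choose l) * H l)
     = - (\<Sum>l\<le>c. (-1) ^ (c - l) * of_nat (c choose l) * H l)"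
  proof -
    have "(\<Sum>l\<le>Suc c. (-1) ^ (Suc c - l) * of_nat (c choose l) * H l)
        = (\<Sum>l\<le>c. - ((-1) ^ (c - l) * of_nat (c choose l) * H l))"
      by (simp add: Suc_diff_le binomial_eq_0)
    then show ?thesis
      by (simp add: sum_negf)
  qed
  have "(\<Sum>l\<le>Suc c. (-1) ^ (Suc c - l) * of_nat (Suc c choose l) * H l)
     = (-1) ^ Suc c * H 0 + (\<Sum>l\<le>c. (-1) ^ (c - l) * of_nat (c choose l) * H (Suc l))
        + (\<Sum>l\<le>c. (-1) ^ (c - l) * of_nat (c choose Suc l) * H (Suc l))"
    by (subst sum.atMost_Suc_shift) (simp add: algebra_simps sum.distrib)
  then show ?thesis
    using shifted unshifted by (simp add: algebra_simps sum_subtractf)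
qed

lemma fdiff_funpow:
  fixes h :: "int \<Rightarrow> 'a::comm_ring_1"
  shows "(fdiff ^^ c) h z = (\<Sum>l\<le>c. (-1) ^ (c - l) * of_nat (c choose l) * h (z + int l))"
proof (induction c arbitrary: h)
  case 0
  then show ?case by simp
next
  case (Suc c)
  have "(fdiff ^^ Suc c) h z = (fdiff ^^ c) (fdiff h) z"
    by (simp only: funpow_Suc_right o_apply)
  also have "\<dots> = (\<Sum>l\<le>c. (-1) ^ (c - l) * of_nat (c choose l) * (h (z + int (Suc l)) - h (z + int l)))"
    unfolding Suc fdiff_def by (simp add: ac_simps)
  also have "\<dots> = (\<Sum>l\<le>Suc c. (-1) ^ (Suc c - l) * of_nat (Suc c choose l) * h (z + int l))"
    using alternating_binomial_sum_Suc[of c "\<lambda>l. h (z + int l)"] by simp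
  finally show ?case .
qed

lemma fdiff_funpow_mult_left:
  fixes h :: "int \<Rightarrow> 'a::comm_ring_1"
  shows "(fdiff ^^ c) (\<lambda>z. a * h z) z = a * (fdiff ^^ c) h z"
  by (simp add: fdiff_funpow sum_distrib_left ac_simps)

lemma fdiff_funpow_at_eq_0_imp_eq_0:
  fixes h :: "int \<Rightarrow> 'a::comm_ring_1"
  assumes "\<And>b. b \<le> Y \<Longrightarrow> (fdiff ^^ b) h s = 0" and "m \<le> Y"
  shows "h (s + int m) = 0"
  using assms(2)
proof (induction m rule: less_induct)
  case (less m)
  have "(\<Sum>l<m. (-1) ^ (m - l) * of_nat (m choose l) * h (s + int l)) = 0"
    using less by (intro sum.neutral) auto
  moreover have "(fdiff ^^ m) h s = 0"
    using assms(1) less.prems .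
  ultimately show ?case
    by (simp add: fdiff_funpow lessThan_Suc_atMost[symmetric])
qed

lemma fdiff_funpow_eq_0_window_imp_eq_0:
  fixes h :: "int \<Rightarrow> 'a::comm_ring_1"
  assumes diff: "\<And>z. (fdiff ^^ Suc N) h z = 0"
    and window: "\<And>l. l \<le> N \<Longrightarrow> h (s + int l) = 0"
  shows "h z = 0"
proof -
  define P where "P i \<longleftrightarrow> (\<forall>l\<le>N. h (i + int l) = 0)" for i
  have recurrence: "(\<Sum>l\<le>Suc N. (-1) ^ (Suc N - l) * of_nat (Suc N choose l) * h (i + int l)) = 0"
    for i
    using diff[of i] unfolding fdiff_funpow .
  have up: "P (i + 1)" if "P i" for i
  proof -
    have "(\<Sum>l\<le>N. (-1) ^ (Suc N - l) * of_nat (Suc N choose l) * h (i + int l)) = 0"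
      using that unfolding P_def by (intro sum.neutral) auto
    then have "h (i + int (Suc N)) = 0"
      using recurrence[of i] by simp
    show ?thesis
      unfolding P_def
    proof (intro allI impI)
      fix l assume "l \<le> N"
      then consider "l = N" | "Suc l \<le> N"
        by linarith
      then show "h (i + 1 + int l) = 0"
      proof cases
        case 1
        then show ?thesis
          using \<open>h (i + int (Suc N)) = 0\<close> by (simp add: ac_simps)
      next
        case 2
        then show ?thesis
          using that[unfolded P_def, rule_format, of "Suc l"] by (simp add: ac_simps)
      qed
    qed
  qed
  have down: "P (i - 1)" if "P i" for i
  proof -
    have "(\<Sum>l\<le>N. (-1) ^ (N - l) * of_nat (Suc N choose Suc l) * h (i - 1 + int (Suc l))) = 0"
      using that unfolding P_def by (intro sum.neutral) auto
    then have "(-1) ^ Suc N * h (i - 1) = 0"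
      using recurrence[of "i - 1"] by (simp add: sum.atMost_Suc_shift del: sum.atMost_Suc)
    then have "h (i - 1) = 0"
      by (simp add: minus_one_power_iff split: if_splits)
    show ?thesis
      unfolding P_def
    proof (intro allI impI)
      fix l assume "l \<le> N"
      then show "h (i - 1 + int l) = 0"
        using \<open>h (i - 1) = 0\<close> that unfolding P_def by (cases l) (simp_all add: ac_simps)
    qed
  qed
  have "P i" for i
    by (induction i rule: int_induct[where k = s]) (use window up down in \<open>auto simp: P_def\<close>)
  then have "h (z + int 0) = 0"
    unfolding P_def by blast
  then show ?thesis
    by simp
qed

lemma fdiff_funpow_vanish_at_0_imp_eq_0:
  fixes h :: "int \<Rightarrow> 'a::comm_ring_1"
  assumes diff: "\<And>z. (fdiff ^^ Suc (X + Y)) h z = 0"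
    and right: "\<And>a. a \<le> X \<Longrightarrow> (fdiff ^^ a) h 0 = 0"
    and left: "\<And>b. b \<le> Y \<Longrightarrow> (fdiff ^^ b) (\<lambda>z. h (- z)) 0 = 0"
  shows "h z = 0"
proof (rule fdiff_funpow_eq_0_window_imp_eq_0[OF diff])
  fix l assume "l \<le> X + Y"
  then consider "Y \<le> l" | "l < Y"
    by linarith
  then show "h (- int Y + int l) = 0"
  proof cases
    case 1
    have "l - Y \<le> X"
      using \<open>l \<le> X + Y\<close> by arith
    then have "h (int (l - Y)) = 0"
      using fdiff_funpow_at_eq_0_imp_eq_0[where Y = X and s = 0, OF right] by simp
    then show ?thesis
      using 1 by (simp add: of_nat_diff)
  next
    case 2
    have "h (- int (Y - l)) = 0"
      using fdiff_funpow_at_eq_0_imp_eq_0[where h = "\<lambda>z. h (- z)" and s = 0, OF left] by simp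
    then show ?thesis
      using 2 by (simp add: of_nat_diff)
  qed
qed

section \<open>Mixed differences on the integer plane\<close>

definition fdiff_fst :: "(int \<Rightarrow> int \<Rightarrow> 'a::ab_group_add) \<Rightarrow> int \<Rightarrow> int \<Rightarrow> 'a" where
  "fdiff_fst f i k = f (i + 1) k - f i k"

definition fdiff_snd :: "(int \<Rightarrow> int \<Rightarrow> 'a::ab_group_add) \<Rightarrow> int \<Rightarrow> int \<Rightarrow> 'a" where
  "fdiff_snd f i k = f i (k + 1) - f i k"

definition fdiff_diag :: "(int \<Rightarrow> int \<Rightarrow> 'a::ab_group_add) \<Rightarrow> int \<Rightarrow> int \<Rightarrow> 'a" where
  "fdiff_diag f i k = f (i + 1) (k + 1) - f i k"

lemma fdiff_fst_funpow: "(fdiff_fst ^^ c) f i k = (fdiff ^^ c) (\<lambda>z. f z k) i"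
proof (induction c arbitrary: f)
  case (Suc c)
  have "(\<lambda>z. fdiff_fst f z k) = fdiff (\<lambda>z. f z k)"
    by (simp add: fun_eq_iff fdiff_fst_def fdiff_def)
  then show ?case
    by (simp only: funpow_Suc_right o_apply Suc)
qed simp

lemma fdiff_snd_funpow: "(fdiff_snd ^^ c) f i = (fdiff ^^ c) (f i)"
proof (induction c arbitrary: f)
  case (Suc c)
  have "fdiff_snd f i = fdiff (f i)"
    by (simp add: fun_eq_iff fdiff_snd_def fdiff_def)
  then show ?case
    by (simp only: funpow_Suc_right o_apply Suc)
qed simp

lemma fdiff_fst_funpow_add: "(fdiff_fst ^^ c) (f + g) = (fdiff_fst ^^ c) f + (fdiff_fst ^^ c) g"
  by (induction c) (simp_all add: fun_eq_iff fdiff_fst_def)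

lemma fdiff_snd_funpow_add: "(fdiff_snd ^^ c) (f + g) = (fdiff_snd ^^ c) f + (fdiff_snd ^^ c) g"
  by (induction c) (simp_all add: fun_eq_iff fdiff_snd_def)

lemma fdiff_snd_funpow_fdiff_fst: "(fdiff_snd ^^ e) (fdiff_fst f) = fdiff_fst ((fdiff_snd ^^ e) f)"
  by (induction e) (simp_all add: fun_eq_iff fdiff_fst_def fdiff_snd_def)

lemma fdiff_diag_eq: "fdiff_diag f = fdiff_fst f + fdiff_snd f + fdiff_fst (fdiff_snd f)"
  by (simp add: fun_eq_iff fdiff_diag_def fdiff_fst_def fdiff_snd_def)

lemma fdiff_snd_eq_0_imp_const:
  assumes "fdiff_snd f = 0"
  shows "f i k = f i 0"
proof (induction k rule: int_induct[where k = 0])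
  case (step1 k)
  then show ?case
    using fun_cong[OF fun_cong[OF assms, of i], of k] by (simp add: fdiff_snd_def)
next
  case (step2 k)
  then show ?case
    using fun_cong[OF fun_cong[OF assms, of i], of "k - 1"] by (simp add: fdiff_snd_def)
qed simp

lemma fdiff_snd_eq_0_fdiff_fst_vanish_imp_eq_0:
  fixes G :: "int \<Rightarrow> int \<Rightarrow> 'a::comm_ring_1"
  assumes const: "fdiff_snd G = 0"
    and diff: "(fdiff_fst ^^ Suc (X + Y)) G = 0"
    and right: "\<And>a. a \<le> X \<Longrightarrow> (fdiff_fst ^^ a) G 0 0 = 0"
    and left: "\<And>b. 1 \<le> b \<Longrightarrow> b \<le> Y \<Longrightarrow>
      (\<Sum>k\<le>b. (-1) ^ (b - k) * of_nat (b choose k) * G (- int k) (\<kappa> k)) = 0"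
  shows "G = 0"
proof -
  have G_const: "G i k = G i 0" for i k
    using const by (rule fdiff_snd_eq_0_imp_const)
  have "G i 0 = 0" for i
  proof (rule fdiff_funpow_vanish_at_0_imp_eq_0[of X Y "\<lambda>i. G i 0"])
    fix z
    show "(fdiff ^^ Suc (X + Y)) (\<lambda>i. G i 0) z = 0"
      using fun_cong[OF fun_cong[OF diff, of z], of 0] unfolding fdiff_fst_funpow by simp
  next
    fix a assume "a \<le> X"
    then show "(fdiff ^^ a) (\<lambda>i. G i 0) 0 = 0"
      using right by (simp add: fdiff_fst_funpow)
  next
    fix b assume "b \<le> Y"
    show "(fdiff ^^ b) (\<lambda>z. G (- z) 0) 0 = 0"
    proof (cases "b = 0")
      case True
      then show ?thesis
        using right[of 0] by simp
    next
      case False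
      then show ?thesis
        using left[of b] \<open>b \<le> Y\<close> G_const[of _ "\<kappa> _"] by (simp add: fdiff_funpow)
    qed
  qed
  then show ?thesis
    using G_const by (simp add: fun_eq_iff)
qed

definition diffs_vanish_from :: "nat \<Rightarrow> (int \<Rightarrow> int \<Rightarrow> 'a::ab_group_add) \<Rightarrow> bool" where
  "diffs_vanish_from d f \<longleftrightarrow> (\<forall>c e. d \<le> c + e \<longrightarrow> (fdiff_fst ^^ c) ((fdiff_snd ^^ e) f) = 0)"

lemma diffs_vanish_fromD:
  "diffs_vanish_from d f \<Longrightarrow> d \<le> c + e \<Longrightarrow> (fdiff_fst ^^ c) ((fdiff_snd ^^ e) f) = 0"
  unfolding diffs_vanish_from_def by blast

lemma diffs_vanish_from_mono: "diffs_vanish_from d f \<Longrightarrow> d \<le> d' \<Longrightarrow> diffs_vanish_from d' f"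
  unfolding diffs_vanish_from_def by auto

lemma diffs_vanish_from_fdiff_diag:
  assumes "diffs_vanish_from (Suc d) f"
  shows "diffs_vanish_from d (fdiff_diag f)"
  unfolding diffs_vanish_from_def
proof (intro allI impI)
  fix c e assume "d \<le> c + e"
  then have "(fdiff_fst ^^ c') ((fdiff_snd ^^ e') f) = 0" if "c + e < c' + e'" for c' e'
    using assms that unfolding diffs_vanish_from_def by auto
  from this[of "Suc c" e] this[of c "Suc e"] this[of "Suc c" "Suc e"]
  show "(fdiff_fst ^^ c) ((fdiff_snd ^^ e) (fdiff_diag f)) = 0"
    by (simp add: fdiff_diag_eq fdiff_fst_funpow_add fdiff_snd_funpow_add
        fdiff_snd_funpow_fdiff_fst funpow_Suc_right del: funpow.simps)
qed

lemma diffs_vanish_from_fdiff_diag_funpow: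
  "diffs_vanish_from (p + d) f \<Longrightarrow> diffs_vanish_from d ((fdiff_diag ^^ p) f)"
proof (induction p arbitrary: f)
  case (Suc p)
  then show ?case
    using diffs_vanish_from_fdiff_diag[of "p + d" f] by (simp add: funpow_Suc_right del: funpow.simps)
qed simp

definition shear :: "(int \<Rightarrow> int \<Rightarrow> 'a) \<Rightarrow> int \<Rightarrow> int \<Rightarrow> 'a" where
  "shear f i k = f (i + k) k"

lemma fdiff_fst_funpow_shear: "(fdiff_fst ^^ c) (shear f) = shear ((fdiff_fst ^^ c) f)"
  by (induction c) (simp_all add: fun_eq_iff fdiff_fst_def shear_def ac_simps)

lemma fdiff_snd_funpow_shear: "(fdiff_snd ^^ c) (shear f) = shear ((fdiff_diag ^^ c) f)"
  by (induction c) (simp_all add: fun_eq_iff fdiff_snd_def fdiff_diag_def shear_def ac_simps)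

lemma diffs_vanish_from_shear:
  assumes "diffs_vanish_from d f"
  shows "diffs_vanish_from d (shear f)"
  unfolding diffs_vanish_from_def
proof (intro allI impI)
  fix c e assume "d \<le> c + e"
  then have "diffs_vanish_from (e + c) f"
    by (intro diffs_vanish_from_mono[OF assms]) linarith
  then have "diffs_vanish_from c ((fdiff_diag ^^ e) f)"
    by (rule diffs_vanish_from_fdiff_diag_funpow)
  from diffs_vanish_fromD[OF this, of c 0] have "(fdiff_fst ^^ c) ((fdiff_diag ^^ e) f) = 0"
    by simp
  then show "(fdiff_fst ^^ c) ((fdiff_snd ^^ e) (shear f)) = 0"
    by (simp only: fdiff_snd_funpow_shear fdiff_fst_funpow_shear) (simp add: shear_def fun_eq_iff)
qed

section \<open>Newton expansions\<close>

definition newton :: "nat \<Rightarrow> int \<Rightarrow> 'a::field_char_0" where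
  "newton a z = of_int z gchoose a"

lemma fdiff_funpow_newton: "(fdiff ^^ c) (newton a) = (if c \<le> a then newton (a - c) else 0)"
proof (induction c)
  case (Suc c)
  have step: "fdiff (newton (Suc m)) = newton m" for m
    by (simp add: fun_eq_iff fdiff_def newton_def gbinomial_Suc_Suc)
  have "fdiff (newton 0) = (\<lambda>_. 0)" and "fdiff (\<lambda>_. 0) = (\<lambda>_. 0 :: 'a)"
    by (simp_all add: fun_eq_iff fdiff_def newton_def)
  moreover have "a - c = Suc (a - Suc c)" if "Suc c \<le> a"
    using that by simp
  ultimately show ?case
    using Suc step by (cases "Suc c \<le> a"; cases "c = a") simp_all
qed simp

lemma newton_at_0: "newton a 0 = (if a = 0 then 1 else 0)"
  by (cases a) (simp_all add: newton_def)

lemma fdiff_funpow_newton_at_0: "(fdiff ^^ c) (newton a) 0 = (if c = a then 1 else 0)"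
  by (simp add: fdiff_funpow_newton newton_at_0)

lemma vbar_eq_newton: "vbar n v \<alpha> = newton (fst \<alpha>) (int (fst v)) * newton (snd \<alpha>) (int (snd v))"
  by (cases v; cases \<alpha>) (simp add: vbar_def newton_def binomial_gbinomial)

lemma fdiff_funpow_sum:
  fixes f :: "'i \<Rightarrow> int \<Rightarrow> 'a::comm_ring_1"
  shows "(fdiff ^^ c) (\<lambda>z. \<Sum>\<alpha>\<in>S. f \<alpha> z) z = (\<Sum>\<alpha>\<in>S. (fdiff ^^ c) (f \<alpha>) z)"
  unfolding fdiff_funpow sum_distrib_left by (rule sum.swap)

lemma fdiff_funpow_mult_right:
  fixes f :: "int \<Rightarrow> 'a::comm_ring_1"
  shows "(fdiff ^^ c) (\<lambda>z. f z * a) z = (fdiff ^^ c) f z * a"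
  using fdiff_funpow_mult_left[where h = f and a = a] by (simp add: mult.commute)

lemma diffs_of_separable_sum:
  fixes F G :: "'i \<Rightarrow> int \<Rightarrow> 'a::comm_ring_1"
  shows "(fdiff_fst ^^ c) ((fdiff_snd ^^ e) (\<lambda>i k. \<Sum>\<alpha>\<in>S. F \<alpha> i * G \<alpha> k)) i k
       = (\<Sum>\<alpha>\<in>S. (fdiff ^^ c) (F \<alpha>) i * (fdiff ^^ e) (G \<alpha>) k)"
  by (simp add: fdiff_fst_funpow fdiff_snd_funpow fdiff_funpow_sum fdiff_funpow_mult_left
      fdiff_funpow_mult_right)

definition newton_sum :: "(nat \<times> nat) set \<Rightarrow> (nat \<times> nat \<Rightarrow> 'a) \<Rightarrow> int \<Rightarrow> int \<Rightarrow> 'a::field_char_0"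
  where "newton_sum S x i k = (\<Sum>\<alpha>\<in>S. x \<alpha> * newton (fst \<alpha>) i * newton (snd \<alpha>) k)"

lemma diffs_newton_sum:
  "(fdiff_fst ^^ c) ((fdiff_snd ^^ e) (newton_sum S x)) i k
     = (\<Sum>\<alpha>\<in>S. x \<alpha> * (fdiff ^^ c) (newton (fst \<alpha>)) i * (fdiff ^^ e) (newton (snd \<alpha>)) k)"
  using diffs_of_separable_sum[where F = "\<lambda>\<alpha> i. x \<alpha> * newton (fst \<alpha>) i"
      and G = "\<lambda>\<alpha>. newton (snd \<alpha>)"]
  by (simp add: newton_sum_def[abs_def] fdiff_funpow_mult_left mult.assoc)

lemma diffs_vanish_from_newton_sum:
  assumes "\<And>\<alpha>. \<alpha> \<in> S \<Longrightarrow> fst \<alpha> + snd \<alpha> < d"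
  shows "diffs_vanish_from d (newton_sum S x)"
  unfolding diffs_vanish_from_def
proof (intro allI impI ext)
  fix c e i k assume "d \<le> c + e"
  then have "\<not> c \<le> fst \<alpha> \<or> \<not> e \<le> snd \<alpha>" if "\<alpha> \<in> S" for \<alpha>
    using assms[OF that] by linarith
  then show "(fdiff_fst ^^ c) ((fdiff_snd ^^ e) (newton_sum S x)) i k = 0 i k"
    unfolding diffs_newton_sum fdiff_funpow_newton by (auto intro!: sum.neutral)
qed

lemma newton_sum_coeff:
  assumes "finite S" and "\<alpha> \<in> S"
  shows "(fdiff_fst ^^ fst \<alpha>) ((fdiff_snd ^^ snd \<alpha>) (newton_sum S x)) 0 0 = x \<alpha>"
proof -
  have "(fdiff_fst ^^ fst \<alpha>) ((fdiff_snd ^^ snd \<alpha>) (newton_sum S x)) 0 0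
      = (\<Sum>\<beta>\<in>S. if \<beta> = \<alpha> then x \<beta> else 0)"
    unfolding diffs_newton_sum fdiff_funpow_newton_at_0
    by (intro sum.cong refl) (auto simp: prod_eq_iff)
  also have "\<dots> = x \<alpha>"
    using assms by simp
  finally show ?thesis .
qed

section \<open>The rows as differences along \<open>A_n\<close>\<close>

definition A_diff :: "nat \<Rightarrow> (int \<Rightarrow> int \<Rightarrow> 'a::comm_ring_1) \<Rightarrow> nat \<times> nat \<times> nat \<Rightarrow> 'a" where
  "A_diff n F \<beta> = (\<Sum>\<gamma>\<in>below3 \<beta>. (-1) ^ (abs3 \<beta> - abs3 \<gamma>) * of_nat (binom3 \<beta> \<gamma>) *
      F (int (fst (A_mul n \<gamma>))) (int (snd (A_mul n \<gamma>))))"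

lemma cvec_row_eq_A_diff:
  "(\<Sum>\<alpha>\<in>Lambda2 n. cvec n \<beta> \<alpha> * x \<alpha>) = A_diff n (newton_sum (Lambda2 n) x) \<beta>"
  unfolding cvec_def A_diff_def newton_sum_def vbar_eq_newton sum_distrib_right sum_distrib_left
  by (subst sum.swap) (simp only: ac_simps)

(* A_n (l,m,k) = (l - k + s, s) with s = m + (n + 1) k: after the shear, the first two
   columns of A_n are the unit vectors and the third one is (-1, n + 1). *)
lemma A_diff_expand:
  fixes F :: "int \<Rightarrow> int \<Rightarrow> 'a::comm_ring_1"
  shows "A_diff n F (b1, b2, b3) = (\<Sum>l\<le>b1. \<Sum>m\<le>b2. \<Sum>k\<le>b3.
      ((-1) ^ (b1 - l) * of_nat (b1 choose l)) * ((-1) ^ (b2 - m) * of_nat (b2 choose m)) *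
      ((-1) ^ (b3 - k) * of_nat (b3 choose k)) * shear F (int l - int k) (int m + int (n + 1) * int k))"
  unfolding A_diff_def below3.simps sum.cartesian_product' atLeast0AtMost
proof (intro sum.cong refl)
  fix l m k assume "l \<in> {..b1}" "m \<in> {..b2}" "k \<in> {..b3}"
  then have "abs3 (b1, b2, b3) - abs3 (l, m, k) = (b1 - l) + (b2 - m) + (b3 - k)"
    by simp
  then show "(-1) ^ (abs3 (b1, b2, b3) - abs3 (l, m, k)) * of_nat (binom3 (b1, b2, b3) (l, m, k)) *
      F (int (fst (A_mul n (l, m, k)))) (int (snd (A_mul n (l, m, k))))
    = ((-1) ^ (b1 - l) * of_nat (b1 choose l)) * ((-1) ^ (b2 - m) * of_nat (b2 choose m)) *
      ((-1) ^ (b3 - k) * of_nat (b3 choose k)) * shear F (int l - int k) (int m + int (n + 1) * int k)"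
    by (simp only: power_add) (simp add: shear_def algebra_simps)
qed

lemma A_diff_third_zero:
  fixes F :: "int \<Rightarrow> int \<Rightarrow> 'a::comm_ring_1"
  shows "A_diff n F (a, p, 0) = (fdiff_fst ^^ a) ((fdiff_snd ^^ p) (shear F)) 0 0"
  by (simp add: A_diff_expand fdiff_fst_funpow fdiff_snd_funpow fdiff_funpow sum_distrib_left ac_simps)

lemma A_diff_first_zero:
  fixes F :: "int \<Rightarrow> int \<Rightarrow> 'a::comm_ring_1"
  shows "A_diff n F (0, p, b) = (\<Sum>k\<le>b. (-1) ^ (b - k) * of_nat (b choose k) *
      (fdiff_snd ^^ p) (shear F) (- int k) (int (n + 1) * int k))"
  unfolding A_diff_expand fdiff_snd_funpow fdiff_funpow sum_distrib_left
  by (simp add: ac_simps) (rule sum.swap)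

section \<open>Staircases\<close>

definition staircase :: "nat \<Rightarrow> (nat \<Rightarrow> nat) \<Rightarrow> (nat \<Rightarrow> nat) \<Rightarrow> (nat \<times> nat \<times> nat) set" where
  "staircase n X Y =
     {(a, p, 0) | a p. p \<le> n \<and> 1 \<le> a \<and> a \<le> X p} \<union>
     {(0, p, b) | p b. p \<le> n \<and> 1 \<le> b \<and> b \<le> Y p} \<union>
     {(0, p, 0) | p. 1 \<le> p \<and> p \<le> n}"

lemma finite_Lambda2: "finite (Lambda2 n)"
proof (rule finite_subset)
  show "Lambda2 n \<subseteq> {0..n} \<times> {0..n}"
    unfolding Lambda2_def by auto
qed simp

lemma staircase_rows_independent:
  fixes x :: "nat \<times> nat \<Rightarrow> complex"
  assumes XY: "\<And>p. p \<le> n \<Longrightarrow> X p + Y p = n - p"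
    and rows: "\<And>\<beta>. \<beta> \<in> staircase n X Y \<Longrightarrow> (\<Sum>\<alpha>\<in>Lambda2 n. cvec n \<beta> \<alpha> * x \<alpha>) = 0"
    and "\<alpha> \<in> Lambda2 n"
  shows "x \<alpha> = 0"
proof -
  define M where "M = shear (newton_sum (Lambda2 n) x)"
  have M_diffs: "diffs_vanish_from (Suc n) M"
    unfolding M_def
    by (intro diffs_vanish_from_shear diffs_vanish_from_newton_sum) (auto simp: Lambda2_def)
  have M_00: "M 0 0 = 0"
    unfolding M_def shear_def newton_sum_def
    by (intro sum.neutral) (auto simp: newton_at_0 Lambda2_def)
  have first: "(fdiff_fst ^^ a) ((fdiff_snd ^^ p) M) 0 0 = 0" if "p \<le> n" "a \<le> X p" for a p
  proof (cases "a = 0 \<and> p = 0")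
    case True
    then show ?thesis
      using M_00 by simp
  next
    case False
    then have "(a, p, 0) \<in> staircase n X Y"
      using that unfolding staircase_def by auto
    from rows[OF this] show ?thesis unfolding cvec_row_eq_A_diff A_diff_third_zero M_def .
  qed
  have third: "(\<Sum>k\<le>b. (-1) ^ (b - k) * of_nat (b choose k) *
      (fdiff_snd ^^ p) M (- int k) (int (n + 1) * int k)) = 0"
    if "p \<le> n" "1 \<le> b" "b \<le> Y p" for b p
  proof -
    have "(0, p, b) \<in> staircase n X Y"
      using that unfolding staircase_def by auto
    from rows[OF this] show ?thesis unfolding cvec_row_eq_A_diff A_diff_first_zero M_def .
  qed
  have columns: "(fdiff_snd ^^ p) M = 0" if "p \<le> Suc n" for p
    using that
  proof (induction p rule: inc_induct)
    case base
    show ?case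
      using diffs_vanish_fromD[OF M_diffs, of 0 "Suc n"] by simp
  next
    case (step p)
    show ?case
    proof (rule fdiff_snd_eq_0_fdiff_fst_vanish_imp_eq_0[of _ "X p" "Y p" "\<lambda>k. int (n + 1) * int k"])
      show "fdiff_snd ((fdiff_snd ^^ p) M) = 0"
        using step.IH by (simp add: zero_fun_def)
      show "(fdiff_fst ^^ Suc (X p + Y p)) ((fdiff_snd ^^ p) M) = 0"
        using XY step.hyps by (intro diffs_vanish_fromD[OF M_diffs]) simp
    qed (use first third step.hyps in auto)
  qed
  have "newton_sum (Lambda2 n) x i k = 0" for i k
    using fun_cong[OF fun_cong[OF columns[of 0]], of "i - k" k] by (simp add: M_def shear_def)
  then show ?thesis
    using newton_sum_coeff[of "Lambda2 n" \<alpha> x] \<open>\<alpha> \<in> Lambda2 n\<close>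
    by (simp add: fdiff_fst_funpow fdiff_snd_funpow fdiff_funpow finite_Lambda2)
qed

lemma finite_Lambda3: "finite (Lambda3 n)"
proof (rule finite_subset)
  show "Lambda3 n \<subseteq> {0..n} \<times> {0..n} \<times> {0..n}"
    unfolding Lambda3_def by auto
qed simp

lemma in_S_A_if_rows_independent:
  assumes "J \<subseteq> Lambda3 n" and "card J = lambda2 n"
    and independent: "\<And>x \<alpha>. (\<And>\<beta>. \<beta> \<in> J \<Longrightarrow> (\<Sum>\<alpha>\<in>Lambda2 n. cvec n \<beta> \<alpha> * x \<alpha>) = 0) \<Longrightarrow>
        \<alpha> \<in> Lambda2 n \<Longrightarrow> x \<alpha> = 0"
  shows "J \<in> S_A n"
proof -
  define m where "m = lambda2 n"
  obtain g where g: "bij_betw g {..<m} (Lambda2 n)"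
    using ex_bij_betw_nat_finite[OF finite_Lambda2] unfolding m_def lambda2_def atLeast0LessThan
    by blast
  have "finite J"
    using assms(1) finite_Lambda3 by (rule finite_subset)
  then obtain f where f: "bij_betw f {..<m} J"
    using ex_bij_betw_nat_finite[of J] assms(2) unfolding m_def atLeast0LessThan by metis
  define C where "C = mat m m (\<lambda>(i, j). cvec n (f i) (g j))"
  have C: "C \<in> carrier_mat m m"
    unfolding C_def by simp
  have "det C \<noteq> 0"
  proof
    assume "det C = 0"
    then obtain v where v: "v \<in> carrier_vec m" "v \<noteq> 0\<^sub>v m" "C *\<^sub>v v = 0\<^sub>v m"
      using det_0_iff_vec_prod_zero[OF C] by blast
    define x where "x \<alpha> = v $ inv_into {..<m} g \<alpha>" for \<alpha>
    have v_eq: "v $ j = x (g j)" if "j < m" for j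
      unfolding x_def using bij_betw_inv_into_left[OF g] that by simp
    have "(\<Sum>\<alpha>\<in>Lambda2 n. cvec n \<beta> \<alpha> * x \<alpha>) = 0" if "\<beta> \<in> J" for \<beta>
    proof -
      obtain i where i: "i < m" "\<beta> = f i"
        using f \<open>\<beta> \<in> J\<close> unfolding bij_betw_def by auto
      have "(\<Sum>\<alpha>\<in>Lambda2 n. cvec n \<beta> \<alpha> * x \<alpha>) = (\<Sum>j<m. cvec n \<beta> (g j) * x (g j))"
        by (rule sum.reindex_bij_betw[OF g, symmetric])
      also have "\<dots> = (C *\<^sub>v v) $ i"
        using i v(1) v_eq unfolding C_def
        by (auto simp: scalar_prod_def atLeast0LessThan intro!: sum.cong)
      also have "\<dots> = 0"
        using v(3) i by simp
      finally show ?thesis .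
    qed
    then have "x (g j) = 0" if "j < m" for j
      using independent bij_betw_apply[OF g] that by blast
    then have "v = 0\<^sub>v m"
      using v(1) v_eq by (intro eq_vecI) auto
    with v(2) show False ..
  qed
  then show ?thesis
    using assms(1,2) f g unfolding S_A_def m_def C_def by blast
qed

definition staircase_param :: "(nat \<Rightarrow> nat) \<Rightarrow> nat \<times> nat \<Rightarrow> nat \<times> nat \<times> nat" where
  "staircase_param X = (\<lambda>(u, p).
     if u = 0 then (0, p, 0) else if u \<le> X p then (u, p, 0) else (0, p, u - X p))"

context
  fixes n :: nat and X Y :: "nat \<Rightarrow> nat"
  assumes XY: "\<And>p. p \<le> n \<Longrightarrow> X p + Y p = n - p"
begin

lemma staircase_subset_Lambda3: "staircase n X Y \<subseteq> Lambda3 n"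
  using XY unfolding staircase_def Lambda3_def by fastforce

lemma bij_betw_staircase_param: "bij_betw (staircase_param X) (Lambda2 n) (staircase n X Y)"
proof (rule bij_betw_imageI)
  show "inj_on (staircase_param X) (Lambda2 n)"
    by (rule inj_onI) (auto simp: staircase_param_def split: if_splits)
  show "staircase_param X ` Lambda2 n = staircase n X Y"
  proof (intro equalityI subsetI)
    fix \<beta> assume "\<beta> \<in> staircase_param X ` Lambda2 n"
    then obtain u p where "(u, p) \<in> Lambda2 n" "\<beta> = staircase_param X (u, p)"
      by auto
    then show "\<beta> \<in> staircase n X Y"
      using XY[of p] unfolding Lambda2_def staircase_def staircase_param_def by auto
  next
    fix \<beta> assume "\<beta> \<in> staircase n X Y"
    then consider (a) a p where "\<beta> = (a, p, 0)" "p \<le> n" "1 \<le> a" "a \<le> X p"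
      | (b) p b where "\<beta> = (0, p, b)" "p \<le> n" "1 \<le> b" "b \<le> Y p"
      | (diag) p where "\<beta> = (0, p, 0)" "1 \<le> p" "p \<le> n"
      unfolding staircase_def by blast
    then show "\<beta> \<in> staircase_param X ` Lambda2 n"
    proof cases
      case a
      then have "\<beta> = staircase_param X (a, p)" "(a, p) \<in> Lambda2 n"
        using XY[of p] by (auto simp: staircase_param_def Lambda2_def)
      then show ?thesis by blast
    next
      case b
      then have "\<beta> = staircase_param X (X p + b, p)" "(X p + b, p) \<in> Lambda2 n"
        using XY[of p] by (auto simp: staircase_param_def Lambda2_def)
      then show ?thesis by blast
    next
      case diag
      then have "\<beta> = staircase_param X (0, p)" "(0, p) \<in> Lambda2 n"
        by (auto simp: staircase_param_def Lambda2_def)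
      then show ?thesis by blast
    qed
  qed
qed

lemma staircase_in_S_A: "staircase n X Y \<in> S_A n"
proof (rule in_S_A_if_rows_independent[OF staircase_subset_Lambda3])
  show "card (staircase n X Y) = lambda2 n"
    using bij_betw_same_card[OF bij_betw_staircase_param] unfolding lambda2_def by simp
qed (rule staircase_rows_independent[OF XY])

end

section \<open>Counting along \<open>\<eta>\<close>\<close>

definition count_upto :: "(nat \<Rightarrow> bool) \<Rightarrow> nat \<Rightarrow> nat" where
  "count_upto P j = card {i \<in> {1..j}. P i}"

lemma count_upto_0 [simp]: "count_upto P 0 = 0"
  by (simp add: count_upto_def)

lemma count_upto_Suc: "count_upto P (Suc j) = count_upto P j + (if P (Suc j) then 1 else 0)"
proof -
  have "{i \<in> {1..Suc j}. P i} = (if P (Suc j) then insert (Suc j) {i \<in> {1..j}. P i} else {i \<in> {1..j}. P i})"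
    by (auto simp: le_Suc_eq)
  then show ?thesis
    by (simp add: count_upto_def)
qed

lemma count_upto_mono: "j \<le> k \<Longrightarrow> count_upto P j \<le> count_upto P k"
  unfolding count_upto_def by (rule card_mono) auto

lemma count_upto_pos: "1 \<le> j \<Longrightarrow> P j \<Longrightarrow> 1 \<le> count_upto P j"
  unfolding count_upto_def by (auto simp: Suc_le_eq card_gt_0_iff)

lemma count_upto_add_count_upto_not: "count_upto P j + count_upto (\<lambda>i. \<not> P i) j = j"
  by (induction j) (simp_all add: count_upto_Suc)

lemma count_upto_attains:
  "(\<exists>j. 1 \<le> j \<and> j + q \<le> n \<and> P j \<and> count_upto P j = a) \<longleftrightarrow>
     q \<le> n \<and> 1 \<le> a \<and> a \<le> count_upto P (n - q)"
proof
  assume "\<exists>j. 1 \<le> j \<and> j + q \<le> n \<and> P j \<and> count_upto P j = a"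
  then show "q \<le> n \<and> 1 \<le> a \<and> a \<le> count_upto P (n - q)"
    using count_upto_pos count_upto_mono by force
next
  assume "q \<le> n \<and> 1 \<le> a \<and> a \<le> count_upto P (n - q)"
  then have "1 \<le> a" "a \<le> count_upto P (n - q)" "q \<le> n"
    by auto
  have "\<exists>j. 1 \<le> j \<and> j \<le> N \<and> P j \<and> count_upto P j = a" if "a \<le> count_upto P N" for N
    using that
  proof (induction N)
    case (Suc N)
    then show ?case
      using \<open>1 \<le> a\<close> by (cases "a \<le> count_upto P N") (auto simp: count_upto_Suc le_Suc_eq split: if_splits)
  qed (use \<open>1 \<le> a\<close> in simp)
  from this[OF \<open>a \<le> count_upto P (n - q)\<close>] show "\<exists>j. 1 \<le> j \<and> j + q \<le> n \<and> P j \<and> count_upto P j = a"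
    using \<open>q \<le> n\<close> by (metis le_diff_conv2 add.commute)
qed

lemma staircase_count_upto_eq_UN_rays:
  "{(0, p, 0) | p. 1 \<le> p \<and> p \<le> n} \<union>
     (\<Union>j\<in>{1..n}. if Q j then (\<lambda>q. (count_upto Q j, q, 0)) ` {..n - j}
                   else (\<lambda>q. (0, q, count_upto (\<lambda>i. \<not> Q i) j)) ` {..n - j})
   = staircase n (\<lambda>p. count_upto Q (n - p)) (\<lambda>p. count_upto (\<lambda>i. \<not> Q i) (n - p))"
  (is "?D \<union> (\<Union>j\<in>{1..n}. ?R j) = staircase n ?X ?Y")
proof (intro equalityI subsetI)
  fix \<beta> assume "\<beta> \<in> ?D \<union> (\<Union>j\<in>{1..n}. ?R j)"
  then consider "\<beta> \<in> ?D"
    | j q where "1 \<le> j" "j + q \<le> n" "Q j" "\<beta> = (count_upto Q j, q, 0)"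
    | j q where "1 \<le> j" "j + q \<le> n" "\<not> Q j" "\<beta> = (0, q, count_upto (\<lambda>i. \<not> Q i) j)"
    by (auto split: if_splits)
  then show "\<beta> \<in> staircase n ?X ?Y"
  proof cases
    case 2
    then show ?thesis
      using count_upto_attains[of q n Q "count_upto Q j"] by (auto simp: staircase_def)
  next
    case 3
    then show ?thesis
      using count_upto_attains[of q n "\<lambda>i. \<not> Q i" "count_upto (\<lambda>i. \<not> Q i) j"]
      by (auto simp: staircase_def)
  qed (auto simp: staircase_def)
next
  fix \<beta> assume "\<beta> \<in> staircase n ?X ?Y"
  then consider "\<beta> \<in> ?D"
    | a p where "\<beta> = (a, p, 0)" "p \<le> n" "1 \<le> a" "a \<le> count_upto Q (n - p)"
    | p b where "\<beta> = (0, p, b)" "p \<le> n" "1 \<le> b" "b \<le> count_upto (\<lambda>i. \<not> Q i) (n - p)"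
    unfolding staircase_def by blast
  then show "\<beta> \<in> ?D \<union> (\<Union>j\<in>{1..n}. ?R j)"
  proof cases
    case 2
    then obtain j where "1 \<le> j" "j + p \<le> n" "Q j" "count_upto Q j = a"
      using count_upto_attains[of p n Q a] by blast
    then have "\<beta> \<in> ?R j" "j \<in> {1..n}"
      using 2 by auto
    then show ?thesis by blast
  next
    case 3
    then obtain j where "1 \<le> j" "j + p \<le> n" "\<not> Q j" "count_upto (\<lambda>i. \<not> Q i) j = b"
      using count_upto_attains[of p n "\<lambda>i. \<not> Q i" b] by blast
    then have "\<beta> \<in> ?R j" "j \<in> {1..n}"
      using 3 by auto
    then show ?thesis by blast
  qed blast
qed

lemma psum_Suc: "psum ds (Suc t) = psum ds t + ds ! t"
  by (simp add: psum_def)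

lemma psum_mono: "t \<le> t' \<Longrightarrow> psum ds t \<le> psum ds t'"
  unfolding psum_def by (rule sum_mono2) auto

lemma tidx_eqI:
  assumes "psum ds t < j" and "j \<le> psum ds (Suc t)"
  shows "tidx ds j = t"
  unfolding tidx_def
proof (rule the_equality)
  fix t' assume t': "psum ds t' < j \<and> j \<le> psum ds (Suc t')"
  show "t' = t"
  proof (rule ccontr)
    assume "t' \<noteq> t"
    then have "Suc t' \<le> t \<or> Suc t \<le> t'"
      by linarith
    then show False
      using psum_mono[of "Suc t'" t ds] psum_mono[of "Suc t" t' ds] assms t' by auto
  qed
qed (use assms in simp)

lemma ex_crossing_step:
  fixes g :: "nat \<Rightarrow> nat"
  assumes "g 0 < j" and "j \<le> g m"
  shows "\<exists>t<m. g t < j \<and> j \<le> g (Suc t)"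
  using assms(2)
proof (induction m)
  case (Suc m)
  then show ?case
    by (cases "j \<le> g m") (auto intro: less_SucI)
qed (use assms(1) in simp)

context
  fixes n :: nat and ds :: "nat list"
  assumes ds_0: "ds ! 0 = 0"
    and ds_pos: "\<forall>i\<in>{1..<length ds}. 1 \<le> ds ! i"
    and ds_sum: "sum_list ds = n"
begin

lemma psum_length: "psum ds (length ds) = n"
  unfolding psum_def ds_sum[symmetric] sum_list_sum_nth by (simp add: atLeast0LessThan)

lemma tidx_bounds:
  assumes "1 \<le> j" and "j \<le> n"
  shows "psum ds (tidx ds j) < j" "j \<le> psum ds (Suc (tidx ds j))" "tidx ds j < length ds"
proof -
  obtain t where "t < length ds" "psum ds t < j" "j \<le> psum ds (Suc t)"
    using ex_crossing_step[of "psum ds" j "length ds"] assms psum_length by (auto simp: psum_def)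
  moreover from this have "tidx ds j = t"
    by (intro tidx_eqI)
  ultimately show "psum ds (tidx ds j) < j" "j \<le> psum ds (Suc (tidx ds j))" "tidx ds j < length ds"
    by simp_all
qed

lemma tidx_1:
  assumes "1 \<le> n"
  shows "tidx ds 1 = 1"
proof (rule tidx_eqI)
  show "psum ds 1 < 1"
    using ds_0 by (simp add: psum_def)
  have "psum ds (tidx ds 1) < 1" "1 \<le> psum ds (Suc (tidx ds 1))" "tidx ds 1 < length ds"
    using tidx_bounds[of 1] assms by simp_all
  then have "1 < length ds"
    using ds_0 by (cases "tidx ds 1") (auto simp: psum_def)
  then show "1 \<le> psum ds (Suc 1)"
    using ds_pos ds_0 by (simp add: psum_def numeral_2_eq_2)
qed

lemma tidx_Suc:
  assumes "1 \<le> j" and "Suc j \<le> n"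
  shows "tidx ds (Suc j) = (if j < psum ds (Suc (tidx ds j)) then tidx ds j else Suc (tidx ds j))"
proof -
  define t where "t = tidx ds j"
  have t: "psum ds t < j" "j \<le> psum ds (Suc t)"
    using tidx_bounds[of j] assms unfolding t_def by simp_all
  show ?thesis
  proof (cases "j < psum ds (Suc t)")
    case True
    then show ?thesis
      using t by (simp add: t_def[symmetric] tidx_eqI)
  next
    case False
    then have j: "j = psum ds (Suc t)"
      using t by simp
    have "Suc t < length ds"
    proof (rule ccontr)
      assume "\<not> Suc t < length ds"
      then have "n \<le> psum ds (Suc t)"
        using psum_mono[of "length ds" "Suc t" ds] psum_length by simp
      then show False
        using j assms by simp
    qed
    then have "Suc j \<le> psum ds (Suc (Suc t))"
      using ds_pos j by (simp add: psum_Suc)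
    then have "tidx ds (Suc j) = Suc t"
      using j by (intro tidx_eqI) simp_all
    then show ?thesis
      using False by (simp add: t_def[symmetric])
  qed
qed

lemma count_upto_tidx_parity:
  assumes "1 \<le> j" and "j \<le> n"
  shows "count_upto (\<lambda>i. odd (tidx ds i) = q) j =
    (\<Sum>i\<in>{i. i < tidx ds j \<and> odd i = q}. ds ! i) +
    (if odd (tidx ds j) = q then j - psum ds (tidx ds j) else 0)"
  using assms
proof (induction j rule: dec_induct)
  case base
  then have "tidx ds 1 = 1"
    by (rule tidx_1)
  moreover have "{i::nat. i < 1 \<and> odd i = q} = (if q then {} else {0})"
    by (auto simp: less_one odd_pos)
  ultimately show ?case
    using ds_0 by (simp add: count_upto_Suc psum_def)
next
  case (step j)
  define t where "t = tidx ds j"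
  have t: "psum ds t < j" "j \<le> psum ds (Suc t)"
    using tidx_bounds[of j] step unfolding t_def by simp_all
  have IH: "count_upto (\<lambda>i. odd (tidx ds i) = q) j =
      (\<Sum>i\<in>{i. i < t \<and> odd i = q}. ds ! i) + (if odd t = q then j - psum ds t else 0)"
    using step unfolding t_def by simp
  show ?case
  proof (cases "j < psum ds (Suc t)")
    case True
    then have "tidx ds (Suc j) = t"
      using tidx_Suc[of j] step unfolding t_def by simp
    then show ?thesis
      using IH t by (simp add: count_upto_Suc Suc_diff_le)
  next
    case False
    then have "tidx ds (Suc j) = Suc t" and j: "j = psum ds (Suc t)"
      using tidx_Suc[of j] step t unfolding t_def by simp_all
    have "{i. i < Suc t \<and> odd i = q} =
        (if odd t = q then insert t {i. i < t \<and> odd i = q} else {i. i < t \<and> odd i = q})"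
      by (auto simp: less_Suc_eq)
    then show ?thesis
      using IH j \<open>tidx ds (Suc j) = Suc t\<close> by (simp add: count_upto_Suc psum_Suc)
  qed
qed

end

section \<open>The preimage of \<open>T'\<close>\<close>

definition on_first_axis :: "nat \<Rightarrow> nat list \<Rightarrow> nat \<Rightarrow> bool" where
  "on_first_axis z ds j \<longleftrightarrow> (odd (tidx ds j) \<longleftrightarrow> z = 1)"

lemma T_set_eq_image: "T_set n j eta = (\<lambda>p. (fst (v_vec j eta) + p, snd (v_vec j eta) + p)) ` {..n - j}"
  by (auto simp: T_set_def)

lemma inj_on_A_mul: "inj_on (A_mul n) (Lambda3 n)"
proof (rule inj_onI)
  fix \<beta> \<beta>' assume "\<beta> \<in> Lambda3 n" "\<beta>' \<in> Lambda3 n" "A_mul n \<beta> = A_mul n \<beta>'"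
  moreover obtain b1 b2 b3 c1 c2 c3 where "\<beta> = (b1, b2, b3)" "\<beta>' = (c1, c2, c3)"
    by (cases \<beta>; cases \<beta>')
  ultimately have le: "b2 \<le> n" "c2 \<le> n"
    and fst_eq: "b1 + b2 + n * b3 = c1 + c2 + n * c3"
    and snd_eq: "b2 + (n + 1) * b3 = c2 + (n + 1) * c3"
    by (auto simp: Lambda3_def)
  have "(b2 + (n + 1) * b3) div (n + 1) = b3" "(c2 + (n + 1) * c3) div (n + 1) = c3"
    using le by (subst div_mult_self2; simp)+
  then have "b3 = c3"
    using snd_eq by metis
  then show "\<beta> = \<beta>'"
    using \<open>\<beta> = (b1, b2, b3)\<close> \<open>\<beta>' = (c1, c2, c3)\<close> fst_eq snd_eq by simp
qed

context
  fixes n :: nat and z :: nat and ds :: "nat list"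
  assumes z: "z \<in> {0, 1}"
    and ds_0: "ds ! 0 = 0"
    and ds_pos: "\<forall>i\<in>{1..<length ds}. 1 \<le> ds ! i"
    and ds_sum: "sum_list ds = n"
begin

lemma v_vec_eq:
  assumes j: "1 \<le> j" "j \<le> n"
  shows "v_vec j (z, ds) =
    (if on_first_axis z ds j then (count_upto (on_first_axis z ds) j, 0)
     else (0, count_upto (\<lambda>i. \<not> on_first_axis z ds i) j))"
  using z count_upto_tidx_parity[OF ds_0 ds_pos ds_sum j, of True]
    count_upto_tidx_parity[OF ds_0 ds_pos ds_sum j, of False]
  by (auto simp: v_vec_def Let_def on_first_axis_def[abs_def] oddsum_def evensum_def)

lemma shifted_T_set_eq:
  assumes "1 \<le> j" and "j \<le> n"
  shows "(\<lambda>(a, b). (a + r_val n j (z, ds), b + r_val n j (z, ds))) ` T_set n j (z, ds) =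
    A_mul n ` (if on_first_axis z ds j
               then (\<lambda>q. (count_upto (on_first_axis z ds) j, q, 0)) ` {..n - j}
               else (\<lambda>q. (0, q, count_upto (\<lambda>i. \<not> on_first_axis z ds i) j)) ` {..n - j})"
  unfolding T_set_eq_image r_val_def v_vec_eq[OF assms]
  by (cases "on_first_axis z ds j") (auto simp: image_image algebra_simps intro!: image_cong)

lemma T'_set_eq_image_staircase:
  "T'_set n (z, ds) = A_mul n ` staircase n
     (\<lambda>p. count_upto (on_first_axis z ds) (n - p))
     (\<lambda>p. count_upto (\<lambda>i. \<not> on_first_axis z ds i) (n - p))"
proof -
  have "T0_set n = A_mul n ` {(0, p, 0) | p. 1 \<le> p \<and> p \<le> n}"
    by (force simp: T0_set_def)
  moreover have "(\<Union>j\<in>{1..n}. (\<lambda>(a, b). (a + r_val n j (z, ds), b + r_val n j (z, ds))) ` T_set n j (z, ds))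
    = A_mul n ` (\<Union>j\<in>{1..n}. if on_first_axis z ds j
        then (\<lambda>q. (count_upto (on_first_axis z ds) j, q, 0)) ` {..n - j}
        else (\<lambda>q. (0, q, count_upto (\<lambda>i. \<not> on_first_axis z ds i) j)) ` {..n - j})"
    unfolding image_UN by (intro SUP_cong refl) (simp add: shifted_T_set_eq)
  ultimately show ?thesis
    unfolding T'_set_def staircase_count_upto_eq_UN_rays[symmetric] by (simp only: image_Un[symmetric])
qed

end

theorem proposition3p4:
  fixes n :: nat and eta :: "nat \<times> nat list"
  assumes "1 \<le> n" and "eta \<in> Omega n"
  shows "(\<exists>!J. J \<subseteq> Lambda3 n \<and> A_mul n ` J = T'_set n eta) \<and>
         (\<forall>J. J \<subseteq> Lambda3 n \<and> A_mul n ` J = T'_set n eta \<longrightarrow> J \<in> S_A n)"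
proof -
  obtain z ds where eta: "eta = (z, ds)"
    by (cases eta)
  then have z: "z \<in> {0, 1}" and ds: "ds ! 0 = 0" "\<forall>i\<in>{1..<length ds}. 1 \<le> ds ! i" "sum_list ds = n"
    using assms(2) unfolding Omega_def by auto
  define X where "X p = count_upto (on_first_axis z ds) (n - p)" for p
  define Y where "Y p = count_upto (\<lambda>i. \<not> on_first_axis z ds i) (n - p)" for p
  have XY: "X p + Y p = n - p" for p
    unfolding X_def Y_def by (rule count_upto_add_count_upto_not)
  have image: "A_mul n ` staircase n X Y = T'_set n eta"
    unfolding eta X_def Y_def using T'_set_eq_image_staircase[OF z ds] by simp
  have unique: "J = staircase n X Y" if "J \<subseteq> Lambda3 n" "A_mul n ` J = T'_set n eta" for J
    using inj_on_image_eq_iff[OF inj_on_A_mul that(1) staircase_subset_Lambda3[OF XY]] that(2) image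
    by simp
  have exists: "staircase n X Y \<subseteq> Lambda3 n \<and> A_mul n ` staircase n X Y = T'_set n eta"
    using staircase_subset_Lambda3[OF XY] image by blast
  show ?thesis
  proof (intro conjI allI impI)
    show "\<exists>!J. J \<subseteq> Lambda3 n \<and> A_mul n ` J = T'_set n eta"
      using exists unique by (intro ex1I[where a = "staircase n X Y"]) blast+
  next
    fix J assume "J \<subseteq> Lambda3 n \<and> A_mul n ` J = T'_set n eta"
    then have "J = staircase n X Y"
      using unique by blast
    then show "J \<in> S_A n"
      using staircase_in_S_A[OF XY] by simp
  qed
qed

end
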